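(* Let $(G;\gamma_0,\gamma_1,\gamma_2)$ be a regular hypermap, $H=\langle\gamma_1,\gamma_2\rangle$ and $K=\langle\gamma_2,\gamma_0\rangle$. Then the hyperedge-multiplicity of its underlying hypergraph equals the index $\left|\bigcap_{x\in K}KH^x : K\right|$, where $H^x=x^{-1}Hx$.
   Context: A regular hypermap is identified with a triple $(G;\gamma_0,\gamma_1,\gamma_2)$ where $G$ is a finite group generated by three involutions $\gamma_0,\gamma_1,\gamma_2$. Put $H=\langle\gamma_1,\gamma_2\rangle$, $K=\langle\gamma_2,\gamma_0\rangle$. Hypervertices are the right cosets $Hg$, hyperedges the right cosets $Kg$, and a hypervertex and a hyperedge are incident iff the cosets intersect. The hypervertices incident with the hyperedge $K$ are the cosets $Hx$, $x\in K$. The hyperedge-multiplicity is the number of hyperedges $Kg$ that are incident with every hypervertex incident with the hyperedge $K$ (by regularity this is the same for every hyperedge). The underlying hypergraph is called simple if its hyperedge-multiplicity is $1$. Note $\bigcap_{x\in K}KH^x$ is a union of right cosets of $K$. *)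

theory Defs
  imports "HOL-Algebra.Algebra"
begin

definition involution :: "('a, 'b) monoid_scheme \<Rightarrow> 'a \<Rightarrow> bool" where
  "involution G g \<longleftrightarrow> g \<in> carrier G \<and> g \<noteq> \<one>\<^bsub>G\<^esub> \<and> g \<otimes>\<^bsub>G\<^esub> g = \<one>\<^bsub>G\<^esub>"

definition regular_hypermap :: "('a, 'b) monoid_scheme \<Rightarrow> 'a \<Rightarrow> 'a \<Rightarrow> 'a \<Rightarrow> bool" where
  "regular_hypermap G g0 g1 g2 \<longleftrightarrow> group G \<and> finite (carrier G) \<and>
     involution G g0 \<and> involution G g1 \<and> involution G g2 \<and>
     generate G {g0, g1, g2} = carrier G"

text \<open>Hyperedge-multiplicity: number of hyperedges (right cosets K g) incident with
  every hypervertex H x, x in K, incident with the hyperedge K.\<close>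
definition hyperedge_multiplicity :: "('a, 'b) monoid_scheme \<Rightarrow> 'a \<Rightarrow> 'a \<Rightarrow> 'a \<Rightarrow> nat" where
  "hyperedge_multiplicity G g0 g1 g2 =
    (let H = generate G {g1, g2}; K = generate G {g2, g0} in
     card {E \<in> rcosets\<^bsub>G\<^esub> K. \<forall>x\<in>K. (H #>\<^bsub>G\<^esub> x) \<inter> E \<noteq> {}})"

definition conj_set :: "('a, 'b) monoid_scheme \<Rightarrow> 'a set \<Rightarrow> 'a \<Rightarrow> 'a set" where
  "conj_set G H x = (inv\<^bsub>G\<^esub> x) <#\<^bsub>G\<^esub> (H #>\<^bsub>G\<^esub> x)"

text \<open>Index |S : K| of K in a set S that is a union of right cosets of K.\<close>
definition set_index :: "'a set \<Rightarrow> 'a set \<Rightarrow> nat" where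
  "set_index S K = card S div card K"

end

theory Submission
  imports Defs
begin

text \<open>Since \<open>x \<in> K\<close>, the product \<open>K H\<^sup>x = K x\<inverse> H x\<close> collapses to \<open>K H x\<close>, and the
  hypervertex \<open>H x\<close> meets the hyperedge \<open>K g\<close> exactly when \<open>g \<in> K H x\<close>. So the hyperedges
  incident with all hypervertices of \<open>K\<close> are the right cosets of \<open>K\<close> contained in
  \<open>S = \<Inter>x\<in>K. K H\<^sup>x\<close>, which is a union of right cosets of \<open>K\<close>; counting them gives
  \<open>|S| / |K|\<close>.\<close>

lemma (in group) set_mult_conj_set:
  assumes K: "subgroup K G" and H: "H \<subseteq> carrier G" and x: "x \<in> K"
  shows "K <#> conj_set G H x = (K <#> H) #> x"
proof -
  have KG: "K \<subseteq> carrier G" and xG: "x \<in> carrier G"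
    using subgroup.subset[OF K] x by auto
  have "K <#> conj_set G H x = (K #> inv x) <#> (H #> x)"
    unfolding conj_set_def using KG H xG by (simp add: rcos_assoc_lcos r_coset_subset_G)
  also have "K #> inv x = K"
    using subgroup.rcos_const[OF K is_group] subgroup.m_inv_closed[OF K x] by simp
  also have "K <#> (H #> x) = (K <#> H) #> x"
    using KG H xG by (rule setmult_rcos_assoc)
  finally show ?thesis .
qed

lemma (in group) rcos_meets_rcos_iff:
  assumes K: "subgroup K G" and H: "H \<subseteq> carrier G"
    and x: "x \<in> carrier G" and g: "g \<in> carrier G"
  shows "(H #> x) \<inter> (K #> g) \<noteq> {} \<longleftrightarrow> g \<in> (K <#> H) #> x"
proof
  assume "(H #> x) \<inter> (K #> g) \<noteq> {}"
  then obtain h k where h: "h \<in> H" and k: "k \<in> K" and eq: "h \<otimes> x = k \<otimes> g"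
    unfolding r_coset_def by blast
  have hG: "h \<in> carrier G" and kG: "k \<in> carrier G"
    using h H k subgroup.mem_carrier[OF K] by auto
  have "g = (inv k \<otimes> h) \<otimes> x"
    using eq hG kG x g by (simp add: m_assoc inv_solve_left)
  moreover have "inv k \<otimes> h \<in> K <#> H"
    using subgroup.m_inv_closed[OF K k] h unfolding set_mult_def by blast
  ultimately show "g \<in> (K <#> H) #> x"
    unfolding r_coset_def by blast
next
  assume "g \<in> (K <#> H) #> x"
  then obtain k h where k: "k \<in> K" and h: "h \<in> H" and eq: "g = (k \<otimes> h) \<otimes> x"
    unfolding r_coset_def set_mult_def by blast
  have hG: "h \<in> carrier G" and kG: "k \<in> carrier G"
    using h H k subgroup.mem_carrier[OF K] by auto
  have "h \<otimes> x = inv k \<otimes> g"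
    using eq hG kG x by (simp add: m_assoc inv_solve_left)
  then have "h \<otimes> x \<in> (H #> x) \<inter> (K #> g)"
    using h subgroup.m_inv_closed[OF K k] unfolding r_coset_def by force
  then show "(H #> x) \<inter> (K #> g) \<noteq> {}" by blast
qed

lemma (in group) rcos_subset_iff:
  assumes K: "subgroup K G" and S: "K <#> S \<subseteq> S" and g: "g \<in> carrier G"
  shows "K #> g \<subseteq> S \<longleftrightarrow> g \<in> S"
proof
  assume "K #> g \<subseteq> S"
  then show "g \<in> S" using rcos_self[OF g K] by blast
next
  assume "g \<in> S"
  then have "K #> g \<subseteq> K <#> S"
    unfolding r_coset_eq_set_mult by (intro mono_set_mult) auto
  then show "K #> g \<subseteq> S" using S by blast
qed

lemma (in group) card_rcosets_within:
  assumes fin: "finite (carrier G)" and K: "subgroup K G"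
    and SG: "S \<subseteq> carrier G" and S: "K <#> S \<subseteq> S"
  shows "card {E \<in> rcosets K. E \<subseteq> S} * card K = card S"
proof -
  let ?C = "{E \<in> rcosets K. E \<subseteq> S}"
  have union: "\<Union>?C = S"
  proof
    show "S \<subseteq> \<Union>?C"
    proof
      fix g assume gS: "g \<in> S"
      with SG have g: "g \<in> carrier G" by blast
      have "K #> g \<in> ?C"
        using rcosetsI[OF subgroup.subset[OF K] g] rcos_subset_iff[OF K S g] gS by simp
      with rcos_self[OF g K] show "g \<in> \<Union>?C" by blast
    qed
  qed blast
  have "card K * card ?C = card (\<Union>?C)"
  proof (rule card_partition)
    show "finite ?C"
      using finite_subset[OF rcosets_subset_PowG[OF K]] fin by auto
    show "finite (\<Union>?C)"
      using union finite_subset[OF SG fin] by simp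
    show "\<And>E. E \<in> ?C \<Longrightarrow> card E = card K"
      using card_rcosets_equal subgroup.subset[OF K] by auto
    show "\<And>E E'. \<lbrakk>E \<in> ?C; E' \<in> ?C; E \<noteq> E'\<rbrakk> \<Longrightarrow> E \<inter> E' = {}"
      using rcos_disjoint[OF K] by (auto simp: pairwise_def disjnt_def)
  qed
  then show ?thesis
    using union by (simp add: mult.commute)
qed

lemma (in group) card_rcosets_meeting_all:
  assumes fin: "finite (carrier G)" and K: "subgroup K G" and H: "H \<subseteq> carrier G"
  shows "card {E \<in> rcosets K. \<forall>x\<in>K. (H #> x) \<inter> E \<noteq> {}}
       = card (\<Inter>x\<in>K. K <#> conj_set G H x) div card K"
proof -
  define S where "S = (\<Inter>x\<in>K. (K <#> H) #> x)"
  have KG: "K \<subseteq> carrier G" by (rule subgroup.subset[OF K])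
  have one: "\<one> \<in> K" by (rule subgroup.one_closed[OF K])
  have S_conj: "(\<Inter>x\<in>K. K <#> conj_set G H x) = S"
    unfolding S_def using set_mult_conj_set[OF K H] by simp
  have SG: "S \<subseteq> carrier G"
    unfolding S_def using one r_coset_subset_G[OF setmult_subset_G[OF KG H]] KG by blast
  have K_S: "K <#> S \<subseteq> S"
  proof -
    have "K <#> ((K <#> H) #> x) = (K <#> H) #> x" if "x \<in> K" for x
      using that KG H setmult_subset_G[OF KG H]
      by (simp add: setmult_rcos_assoc set_mult_assoc[symmetric] subgroup_mult_id[OF K] subsetD)
    then show ?thesis
      unfolding S_def set_mult_def by blast
  qed
  have "{E \<in> rcosets K. \<forall>x\<in>K. (H #> x) \<inter> E \<noteq> {}} = {E \<in> rcosets K. E \<subseteq> S}"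
  proof -
    have "(\<forall>x\<in>K. (H #> x) \<inter> (K #> g) \<noteq> {}) \<longleftrightarrow> g \<in> S" if g: "g \<in> carrier G" for g
      using rcos_meets_rcos_iff[OF K H _ g] KG unfolding S_def by blast
    then have "(\<forall>x\<in>K. (H #> x) \<inter> (K #> g) \<noteq> {}) \<longleftrightarrow> K #> g \<subseteq> S" if "g \<in> carrier G" for g
      using rcos_subset_iff[OF K K_S that] that by blast
    then show ?thesis
      unfolding RCOSETS_def by auto
  qed
  moreover have "card K > 0"
    using one finite_subset[OF KG fin] card_gt_0_iff by blast
  ultimately show ?thesis
    using card_rcosets_within[OF fin K SG K_S] S_conj by (metis nonzero_mult_div_cancel_right less_not_refl2)
qed

theorem mainTheorem2:
  fixes G :: "('a, 'b) monoid_scheme" and g0 g1 g2 :: 'a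
  assumes "regular_hypermap G g0 g1 g2"
  shows "hyperedge_multiplicity G g0 g1 g2 =
    set_index (\<Inter>x\<in>generate G {g2, g0}.
                 generate G {g2, g0} <#>\<^bsub>G\<^esub> conj_set G (generate G {g1, g2}) x)
              (generate G {g2, g0})"
proof -
  have G: "group G" and fin: "finite (carrier G)"
    and gens: "g0 \<in> carrier G" "g1 \<in> carrier G" "g2 \<in> carrier G"
    using assms unfolding regular_hypermap_def involution_def by auto
  have H: "generate G {g1, g2} \<subseteq> carrier G"
    using group.generate_incl[OF G] gens by simp
  have K: "subgroup (generate G {g2, g0}) G"
    using group.generate_is_subgroup[OF G] gens by simp
  show ?thesis
    unfolding hyperedge_multiplicity_def set_index_def Let_def
    by (rule group.card_rcosets_meeting_all[OF G fin K H])
qed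

end
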